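(* Assume that there exists a Banach space $(Z,|||\cdot|||)$ compactly embedded in $Y$, and that all $\Gamma_x(s,t)$ ($x\in X$, $(s,t)\in\Delta_J$) and all $D^\epsilon(x,y)$ ($\epsilon \in (0,1]$, $(x,y) \in X \times X$) are $\mathcal{B}(Z)$-contractions (they map $Z$ into $Z$ with operator norm on $Z$ at most $1$). Then $\{V_\epsilon\}$ satisfies the compact containment criterion in $Z$: for every $f\in Z$, $s\in J$, $\Delta\in(0,1]$ and $T\in J(s)$ there is a compact set $K\subseteq Y$ with $\liminf_{\epsilon\to0}\mathbb P[V_\epsilon(s,t)f\in K\ \forall t\in[s,T]]\ge1-\Delta$.
   Context: $(Y,\|\cdot\|)$ is a real separable Banach space; $J$ is $\mathbb{R}^+$ or $[0,T_\infty]$, $\Delta_J=\{(s,t)\in J^2:s\le t\}$, $J(s)=\{t\in J:t\ge s\}$. An inhomogeneous $Y$-semigroup is a map $\Gamma:\Delta_J\to\mathcal B(Y)$ with $\Gamma(t,t)=I$, $\Gamma(s,r)\Gamma(r,t)=\Gamma(s,t)$ for $s\le r\le t$. Probabilistic setting: $(\Omega,\mathcal F,\mathbb P)$ complete; $X$ finite; $(x_n,T_n)_{n\ge0}$ a Markov renewal process ($x_n\in X$, $T_0=0<T_1<T_2<\dots$) with semi-Markov kernel $Q$; $N(t)=\sup\{n:T_n\le t\}$ (finite everywhere after restricting $\Omega$ to a full-measure event); $x(t)=x_{N(t)}$; $N_s(t)=N(t)-N(s)$, $T_0(s)=s$, $T_n(s)=T_{N(s)+n}$ ($n\ge1$), $x_n(s)=x(T_n(s))$.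 $(\Gamma_x)_{x\in X}$ are inhomogeneous $Y$-semigroups (jointly measurable in their arguments) and $(D^\epsilon(x,y))_{x,y\in X,\epsilon\in(0,1]}$ are operators in $\mathcal B(Y)$ with $(x,y,f)\mapsto D^\epsilon(x,y)f$ measurable. With $t^{\epsilon,s}:=s+\epsilon(t-s)$ and $T^{\epsilon,s}_k(s):=s+\epsilon(T_k(s)-s)$, the rescaled random evolution is defined pathwise for $(s,t)\in\Delta_J$, $\epsilon\in(0,1]$ by $V_\epsilon(s,t)=\Big[\prod_{k=1}^{N_s(t^{1/\epsilon,s})}\Gamma_{x_{k-1}(s)}(T^{\epsilon,s}_{k-1}(s),T^{\epsilon,s}_k(s))D^\epsilon(x_{k-1}(s),x_k(s))\Big]\Gamma_{x(t^{1/\epsilon,s})}\big(T^{\epsilon,s}_{N_s(t^{1/\epsilon,s})}(s),t\big)$ (product ordered left to right, empty product $I$), where $t^{1/\epsilon,s}=s+(t-s)/\epsilon$. *)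

theory Defs
  imports "HOL-Probability.Probability"
begin

definition DeltaJ :: "real set \<Rightarrow> (real \<times> real) set" where
  "DeltaJ J = {(s,t). s \<in> J \<and> t \<in> J \<and> s \<le> t}"

definition is_time_set :: "real set \<Rightarrow> bool" where
  "is_time_set J \<longleftrightarrow> J = {0..} \<or> (\<exists>Tinf. J = {0..Tinf})"

definition inhom_semigroup :: "real set \<Rightarrow> (real \<Rightarrow> real \<Rightarrow> ('y::real_normed_vector \<Rightarrow>\<^sub>L 'y)) \<Rightarrow> bool" where
  "inhom_semigroup J G \<longleftrightarrow>
     (\<forall>t\<in>J. G t t = id_blinfun) \<and>
     (\<forall>s r t. s \<in> J \<and> t \<in> J \<and> s \<le> r \<and> r \<le> t \<longrightarrow> G s r o\<^sub>L G r t = G s t)"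

definition semi_markov_kernel :: "('x::finite \<Rightarrow> 'x \<Rightarrow> real \<Rightarrow> real) \<Rightarrow> bool" where
  "semi_markov_kernel Q \<longleftrightarrow>
     (\<forall>x y. mono (Q x y)) \<and>
     (\<forall>x y t. t \<le> 0 \<longrightarrow> Q x y t = 0) \<and>
     (\<forall>x y t. continuous (at_right t) (Q x y)) \<and>
     (\<forall>x. ((\<lambda>t. \<Sum>y\<in>UNIV. Q x y t) \<longlongrightarrow> 1) at_top)"

definition past_sigma :: "'w measure \<Rightarrow> (nat \<Rightarrow> 'w \<Rightarrow> 'x) \<Rightarrow> (nat \<Rightarrow> 'w \<Rightarrow> real) \<Rightarrow> nat \<Rightarrow> 'w set set" where
  "past_sigma M xs Tn n = sigma_sets (space M)
     ((\<Union>k\<in>{..n}. {xs k -` {x} \<inter> space M | x. True}) \<union>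
      (\<Union>k\<in>{..n}. {Tn k -` {..r} \<inter> space M | r. True}))"

text \<open>(xs n, Tn n) is a Markov renewal process with semi-Markov kernel Q; moreover the
  jump times tend to infinity on every sample path (the sample space has been restricted
  to the full-measure event on which N(t) is finite for all t).\<close>
definition markov_renewal :: "'w measure \<Rightarrow> (nat \<Rightarrow> 'w \<Rightarrow> 'x::finite) \<Rightarrow> (nat \<Rightarrow> 'w \<Rightarrow> real)
    \<Rightarrow> ('x \<Rightarrow> 'x \<Rightarrow> real \<Rightarrow> real) \<Rightarrow> bool" where
  "markov_renewal M xs Tn Q \<longleftrightarrow>
     prob_space M \<and> semi_markov_kernel Q \<and>
     (\<forall>n. xs n \<in> measurable M (count_space UNIV)) \<and>
     (\<forall>n. Tn n \<in> borel_measurable M) \<and>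
     (\<forall>\<omega>\<in>space M. Tn 0 \<omega> = 0) \<and>
     (\<forall>\<omega>\<in>space M. \<forall>n. Tn n \<omega> < Tn (Suc n) \<omega>) \<and>
     (\<forall>\<omega>\<in>space M. filterlim (\<lambda>n. Tn n \<omega>) at_top sequentially) \<and>
     (\<forall>n y t. \<forall>A\<in>past_sigma M xs Tn n.
        measure M (A \<inter> {\<omega>\<in>space M. xs (Suc n) \<omega> = y \<and> Tn (Suc n) \<omega> - Tn n \<omega> \<le> t})
        = (\<integral>\<omega>. indicator A \<omega> * Q (xs n \<omega>) y t \<partial>M))"

definition Ncnt :: "(nat \<Rightarrow> 'w \<Rightarrow> real) \<Rightarrow> real \<Rightarrow> 'w \<Rightarrow> nat" where
  "Ncnt Tn t \<omega> = Sup {n. Tn n \<omega> \<le> t}"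

definition xproc :: "(nat \<Rightarrow> 'w \<Rightarrow> 'x) \<Rightarrow> (nat \<Rightarrow> 'w \<Rightarrow> real) \<Rightarrow> real \<Rightarrow> 'w \<Rightarrow> 'x" where
  "xproc xs Tn t \<omega> = xs (Ncnt Tn t \<omega>) \<omega>"

definition Ns :: "(nat \<Rightarrow> 'w \<Rightarrow> real) \<Rightarrow> real \<Rightarrow> real \<Rightarrow> 'w \<Rightarrow> nat" where
  "Ns Tn s t \<omega> = Ncnt Tn t \<omega> - Ncnt Tn s \<omega>"

definition Ts :: "(nat \<Rightarrow> 'w \<Rightarrow> real) \<Rightarrow> real \<Rightarrow> nat \<Rightarrow> 'w \<Rightarrow> real" where
  "Ts Tn s k \<omega> = (if k = 0 then s else Tn (Ncnt Tn s \<omega> + k) \<omega>)"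

definition xs_s :: "(nat \<Rightarrow> 'w \<Rightarrow> 'x) \<Rightarrow> (nat \<Rightarrow> 'w \<Rightarrow> real) \<Rightarrow> real \<Rightarrow> nat \<Rightarrow> 'w \<Rightarrow> 'x" where
  "xs_s xs Tn s k \<omega> = xproc xs Tn (Ts Tn s k \<omega>) \<omega>"

definition Ts_eps :: "(nat \<Rightarrow> 'w \<Rightarrow> real) \<Rightarrow> real \<Rightarrow> real \<Rightarrow> nat \<Rightarrow> 'w \<Rightarrow> real" where
  "Ts_eps Tn \<epsilon> s k \<omega> = s + \<epsilon> * (Ts Tn s k \<omega> - s)"

fun prodL :: "(nat \<Rightarrow> ('y::real_normed_vector \<Rightarrow>\<^sub>L 'y)) \<Rightarrow> nat \<Rightarrow> ('y \<Rightarrow>\<^sub>L 'y)" where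
  "prodL A 0 = id_blinfun"
| "prodL A (Suc n) = prodL A n o\<^sub>L A (Suc n)"

definition Veps :: "('x \<Rightarrow> real \<Rightarrow> real \<Rightarrow> ('y::real_normed_vector \<Rightarrow>\<^sub>L 'y))
    \<Rightarrow> (real \<Rightarrow> 'x \<Rightarrow> 'x \<Rightarrow> ('y \<Rightarrow>\<^sub>L 'y))
    \<Rightarrow> (nat \<Rightarrow> 'w \<Rightarrow> 'x) \<Rightarrow> (nat \<Rightarrow> 'w \<Rightarrow> real)
    \<Rightarrow> real \<Rightarrow> real \<Rightarrow> real \<Rightarrow> 'w \<Rightarrow> ('y \<Rightarrow>\<^sub>L 'y)" where
  "Veps \<Gamma> D xs Tn \<epsilon> s t \<omega> =
     (let t' = s + (t - s) / \<epsilon>;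
          n = Ns Tn s t' \<omega>
      in prodL (\<lambda>k. \<Gamma> (xs_s xs Tn s (k - 1) \<omega>) (Ts_eps Tn \<epsilon> s (k - 1) \<omega>) (Ts_eps Tn \<epsilon> s k \<omega>)
                    o\<^sub>L D \<epsilon> (xs_s xs Tn s (k - 1) \<omega>) (xs_s xs Tn s k \<omega>)) n
         o\<^sub>L \<Gamma> (xproc xs Tn t' \<omega>) (Ts_eps Tn \<epsilon> s n \<omega>) t)"

definition compact_embedding :: "('z::banach \<Rightarrow> 'y::real_normed_vector) \<Rightarrow> bool" where
  "compact_embedding \<iota> \<longleftrightarrow> bounded_linear \<iota> \<and> inj \<iota> \<and> compact (closure (\<iota> ` cball 0 1))"

definition Z_contraction :: "('z::real_normed_vector \<Rightarrow> 'y::real_normed_vector) \<Rightarrow> ('y \<Rightarrow>\<^sub>L 'y) \<Rightarrow> bool" where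
  "Z_contraction \<iota> L \<longleftrightarrow> (\<forall>z. \<exists>z'. blinfun_apply L (\<iota> z) = \<iota> z' \<and> norm z' \<le> norm z)"

end

theory Submission
  imports Defs
begin

text \<open>The criterion holds pathwise, with no probabilistic input: along every
  path, \<open>V\<^sub>\<epsilon>(s,t)\<close> is a finite composition of operators \<open>\<Gamma>\<^sub>x(u,v)\<close> and \<open>D\<^sup>\<epsilon>(x,y)\<close> whose time
  arguments stay inside \<open>[s,t]\<close>, so it is a \<open>Z\<close>-contraction. Hence \<open>V\<^sub>\<epsilon>(s,t) f\<close> lies in the
  image of the \<open>Z\<close>-ball of radius \<open>|||f|||\<close>, whose closure in \<open>Y\<close> is compact by the compact
  embedding, and the event in question is the whole sample space.\<close>

lemma finite_le_of_filterlim_at_top: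
  fixes T :: "nat \<Rightarrow> real"
  assumes "filterlim T at_top sequentially"
  shows "finite {n. T n \<le> t}"
proof -
  from assms have "eventually (\<lambda>n. T n > t) sequentially"
    by (simp add: filterlim_at_top_dense)
  then obtain N where "\<And>n. n \<ge> N \<Longrightarrow> T n > t"
    by (auto simp: eventually_sequentially)
  then have "{n. T n \<le> t} \<subseteq> {..<N}"
    by (force simp: not_le[symmetric])
  then show ?thesis
    using finite_subset by blast
qed

lemma
  fixes Tn :: "nat \<Rightarrow> 'w \<Rightarrow> real"
  assumes lim: "filterlim (\<lambda>n. Tn n \<omega>) at_top sequentially" and t: "Tn 0 \<omega> \<le> t"
  shows Tn_Ncnt_le: "Tn (Ncnt Tn t \<omega>) \<omega> \<le> t"
    and le_Ncnt: "Tn n \<omega> \<le> t \<Longrightarrow> n \<le> Ncnt Tn t \<omega>"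
proof -
  have fin: "finite {n. Tn n \<omega> \<le> t}"
    by (rule finite_le_of_filterlim_at_top[OF lim])
  have ne: "{n. Tn n \<omega> \<le> t} \<noteq> {}"
    using t by blast
  have Max: "Ncnt Tn t \<omega> = Max {n. Tn n \<omega> \<le> t}"
    unfolding Ncnt_def using cSup_eq_Max[OF fin ne] .
  show "Tn (Ncnt Tn t \<omega>) \<omega> \<le> t"
    using Max_in[OF fin ne] Max by auto
  show "Tn n \<omega> \<le> t \<Longrightarrow> n \<le> Ncnt Tn t \<omega>"
    using Max_ge[OF fin] Max by auto
qed

lemma mono_Ts:
  fixes Tn :: "nat \<Rightarrow> 'w \<Rightarrow> real"
  assumes mono: "strict_mono (\<lambda>n. Tn n \<omega>)"
    and lim: "filterlim (\<lambda>n. Tn n \<omega>) at_top sequentially" and s: "Tn 0 \<omega> \<le> s"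
  shows "mono (\<lambda>k. Ts Tn s k \<omega>)"
proof (rule mono_iff_le_Suc[THEN iffD2], intro allI)
  fix k
  show "Ts Tn s k \<omega> \<le> Ts Tn s (Suc k) \<omega>"
  proof (cases k)
    case 0
    have "\<not> Tn (Ncnt Tn s \<omega> + 1) \<omega> \<le> s"
      using le_Ncnt[of Tn \<omega>, OF lim s] by fastforce
    then show ?thesis
      using 0 by (simp add: Ts_def)
  next
    case (Suc j)
    then show ?thesis
      by (simp add: Ts_def strict_mono_less_eq[OF mono])
  qed
qed

lemma Ts_le_if_le_Ns:
  fixes Tn :: "nat \<Rightarrow> 'w \<Rightarrow> real"
  assumes mono: "strict_mono (\<lambda>n. Tn n \<omega>)"
    and lim: "filterlim (\<lambda>n. Tn n \<omega>) at_top sequentially"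
    and s: "Tn 0 \<omega> \<le> s" and st: "s \<le> t" and k: "k \<le> Ns Tn s t \<omega>"
  shows "Ts Tn s k \<omega> \<le> t"
proof (cases "k = 0")
  case False
  have "Ncnt Tn s \<omega> \<le> Ncnt Tn t \<omega>"
    using Tn_Ncnt_le[of Tn \<omega>, OF lim s] st s by (intro le_Ncnt[of Tn \<omega>, OF lim]) auto
  then have "Ncnt Tn s \<omega> + k \<le> Ncnt Tn t \<omega>"
    using k by (simp add: Ns_def)
  then have "Tn (Ncnt Tn s \<omega> + k) \<omega> \<le> Tn (Ncnt Tn t \<omega>) \<omega>"
    by (simp add: strict_mono_less_eq[OF mono])
  also have "\<dots> \<le> t"
    using Tn_Ncnt_le[of Tn \<omega>, OF lim] s st by simp
  finally show ?thesis
    using False by (simp add: Ts_def)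
qed (simp add: Ts_def st)

lemma Z_contraction_id: "Z_contraction \<iota> id_blinfun"
  unfolding Z_contraction_def by auto

lemma Z_contraction_compose:
  "Z_contraction \<iota> A \<Longrightarrow> Z_contraction \<iota> B \<Longrightarrow> Z_contraction \<iota> (A o\<^sub>L B)"
  unfolding Z_contraction_def by (metis blinfun_apply_blinfun_compose order_trans)

lemma Z_contraction_prodL:
  "(\<And>k. 1 \<le> k \<Longrightarrow> k \<le> n \<Longrightarrow> Z_contraction \<iota> (A k)) \<Longrightarrow> Z_contraction \<iota> (prodL A n)"
  by (induction n) (auto intro!: Z_contraction_compose Z_contraction_id)

lemma Z_contraction_Veps:
  fixes Tn :: "nat \<Rightarrow> 'w \<Rightarrow> real"
  assumes mono: "strict_mono (\<lambda>n. Tn n \<omega>)"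
    and lim: "filterlim (\<lambda>n. Tn n \<omega>) at_top sequentially"
    and s: "Tn 0 \<omega> \<le> s" and st: "s \<le> t" and \<epsilon>: "\<epsilon> \<in> {0<..1}"
    and J: "{s..t} \<subseteq> J"
    and Gamma_contr: "\<And>x u v. (u, v) \<in> DeltaJ J \<Longrightarrow> Z_contraction \<iota> (\<Gamma> x u v)"
    and D_contr: "\<And>x y. Z_contraction \<iota> (D \<epsilon> x y)"
  shows "Z_contraction \<iota> (Veps \<Gamma> D xs Tn \<epsilon> s t \<omega>)"
proof -
  define t' where "t' = s + (t - s) / \<epsilon>"
  define n where "n = Ns Tn s t' \<omega>"
  have \<epsilon>0: "\<epsilon> > 0"
    using \<epsilon> by simp
  have "s \<le> t'"
    using st \<epsilon>0 by (simp add: t'_def)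
  note mono_grid = mono_Ts[of Tn \<omega>, OF mono lim s, THEN monoD]
  have grid_mono: "Ts_eps Tn \<epsilon> s j \<omega> \<le> Ts_eps Tn \<epsilon> s k \<omega>" if "j \<le> k" for j k
    using mono_grid[OF that] \<epsilon>0 by (simp add: Ts_eps_def)
  have grid_ge: "s \<le> Ts_eps Tn \<epsilon> s k \<omega>" for k
    using grid_mono[of 0 k] by (simp add: Ts_eps_def Ts_def)
  have grid_le: "Ts_eps Tn \<epsilon> s k \<omega> \<le> t" if "k \<le> n" for k
  proof -
    have "\<epsilon> * (Ts Tn s k \<omega> - s) \<le> \<epsilon> * (t' - s)"
      using Ts_le_if_le_Ns[of Tn \<omega>, OF mono lim s \<open>s \<le> t'\<close>] that \<epsilon>0 by (simp add: n_def)
    also have "\<dots> = t - s"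
      using \<epsilon>0 by (simp add: t'_def)
    finally show ?thesis
      by (simp add: Ts_eps_def)
  qed
  have in_DeltaJ: "(Ts_eps Tn \<epsilon> s j \<omega>, v) \<in> DeltaJ J"
    if "j \<le> n" "Ts_eps Tn \<epsilon> s j \<omega> \<le> v" "v \<le> t" for j v
    using grid_ge[of j] that J by (auto simp: DeltaJ_def)
  have "Z_contraction \<iota> (prodL (\<lambda>k. \<Gamma> (xs_s xs Tn s (k - 1) \<omega>)
            (Ts_eps Tn \<epsilon> s (k - 1) \<omega>) (Ts_eps Tn \<epsilon> s k \<omega>)
          o\<^sub>L D \<epsilon> (xs_s xs Tn s (k - 1) \<omega>) (xs_s xs Tn s k \<omega>)) n)"
    by (intro Z_contraction_prodL Z_contraction_compose Gamma_contr D_contr in_DeltaJ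
        grid_mono grid_le) auto
  moreover have "Z_contraction \<iota> (\<Gamma> (xproc xs Tn t' \<omega>) (Ts_eps Tn \<epsilon> s n \<omega>) t)"
    by (intro Gamma_contr in_DeltaJ grid_le) auto
  ultimately show ?thesis
    unfolding Veps_def Let_def t'_def[symmetric] n_def[symmetric]
    by (rule Z_contraction_compose)
qed

lemma compact_embedding_image_cball:
  assumes "compact_embedding \<iota>"
  obtains K where "compact K" and "\<And>z. norm z \<le> r \<Longrightarrow> \<iota> z \<in> K"
proof
  define c where "c = max r 1"
  have c0: "c > 0"
    by (simp add: c_def)
  have lin: "linear \<iota>"
    using assms by (simp add: compact_embedding_def bounded_linear.linear)
  show "compact ((\<lambda>y. c *\<^sub>R y) ` closure (\<iota> ` cball 0 1))"
    using assms by (intro compact_scaling) (simp add: compact_embedding_def)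
  fix z :: 'a
  assume "norm z \<le> r"
  then have "norm (z /\<^sub>R c) \<le> 1"
    using c0 by (simp add: c_def field_simps)
  then have "\<iota> (z /\<^sub>R c) \<in> closure (\<iota> ` cball 0 1)"
    using closure_subset by fastforce
  moreover have "\<iota> z = c *\<^sub>R \<iota> (z /\<^sub>R c)"
    using c0 by (simp add: linear_cmul[OF lin])
  ultimately show "\<iota> z \<in> (\<lambda>y. c *\<^sub>R y) ` closure (\<iota> ` cball 0 1)"
    by blast
qed

theorem proposition4p8:
  fixes J :: "real set"
    and M :: "'w measure"
    and xs :: "nat \<Rightarrow> 'w \<Rightarrow> 'x::finite"
    and Tn :: "nat \<Rightarrow> 'w \<Rightarrow> real"
    and Q :: "'x \<Rightarrow> 'x \<Rightarrow> real \<Rightarrow> real"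
    and \<Gamma> :: "'x \<Rightarrow> real \<Rightarrow> real \<Rightarrow> ('y::{banach, second_countable_topology} \<Rightarrow>\<^sub>L 'y)"
    and D :: "real \<Rightarrow> 'x \<Rightarrow> 'x \<Rightarrow> ('y \<Rightarrow>\<^sub>L 'y)"
    and \<iota> :: "'z::banach \<Rightarrow> 'y"
  assumes J: "is_time_set J"
    and complete: "complete_measure M"
    and MRP: "markov_renewal M xs Tn Q"
    and semigroup: "\<And>x. inhom_semigroup J (\<Gamma> x)"
    and Gamma_meas: "\<And>x. (\<lambda>(s, t, f). blinfun_apply (\<Gamma> x s t) f)
                         \<in> borel_measurable (restrict_space borel {(s, t, f). (s, t) \<in> DeltaJ J})"
    and D_meas: "\<And>\<epsilon>. \<epsilon> \<in> {0<..1} \<Longrightarrow>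
                   (\<lambda>(x, y, f). blinfun_apply (D \<epsilon> x y) f)
                     \<in> borel_measurable (count_space UNIV \<Otimes>\<^sub>M count_space UNIV \<Otimes>\<^sub>M borel)"
    and embed: "compact_embedding \<iota>"
    and Gamma_contr: "\<And>x s t. (s, t) \<in> DeltaJ J \<Longrightarrow> Z_contraction \<iota> (\<Gamma> x s t)"
    and D_contr: "\<And>\<epsilon> x y. \<epsilon> \<in> {0<..1} \<Longrightarrow> Z_contraction \<iota> (D \<epsilon> x y)"
  shows "\<forall>f s \<Delta> T. s \<in> J \<and> \<Delta> \<in> {0<..1} \<and> T \<in> J \<and> s \<le> T \<longrightarrow>
           (\<exists>K. compact K \<and>
              Liminf (at_right 0)
                (\<lambda>\<epsilon>. ereal (measure M {\<omega> \<in> space M.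
                    \<forall>t\<in>{s..T}. blinfun_apply (Veps \<Gamma> D xs Tn \<epsilon> s t \<omega>) (\<iota> f) \<in> K}))
              \<ge> ereal (1 - \<Delta>))"
proof (intro allI impI)
  fix f :: 'z and s \<Delta> T :: real
  assume A: "s \<in> J \<and> \<Delta> \<in> {0<..1} \<and> T \<in> J \<and> s \<le> T"
  obtain K where K: "compact K" "\<And>z. norm z \<le> norm f \<Longrightarrow> \<iota> z \<in> K"
    using compact_embedding_image_cball[OF embed] by blast
  have interval: "{s..T} \<subseteq> J" and s0: "0 \<le> s"
    using J A by (auto simp: is_time_set_def)
  have paths: "strict_mono (\<lambda>n. Tn n \<omega>)" "filterlim (\<lambda>n. Tn n \<omega>) at_top sequentially"
    "Tn 0 \<omega> = 0" if "\<omega> \<in> space M" for \<omega>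
    using MRP that unfolding markov_renewal_def by (auto intro: strict_monoI_Suc)
  have whole_space: "{\<omega> \<in> space M. \<forall>t\<in>{s..T}. Veps \<Gamma> D xs Tn \<epsilon> s t \<omega> (\<iota> f) \<in> K} = space M"
    if \<epsilon>: "\<epsilon> \<in> {0<..1}" for \<epsilon>
  proof safe
    fix \<omega> t
    assume \<omega>: "\<omega> \<in> space M" and t: "t \<in> {s..T}"
    have "Z_contraction \<iota> (Veps \<Gamma> D xs Tn \<epsilon> s t \<omega>)"
      using paths[OF \<omega>] s0 t interval by (intro Z_contraction_Veps Gamma_contr D_contr \<epsilon>) auto
    then obtain z where "Veps \<Gamma> D xs Tn \<epsilon> s t \<omega> (\<iota> f) = \<iota> z" "norm z \<le> norm f"
      unfolding Z_contraction_def by blast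
    then show "Veps \<Gamma> D xs Tn \<epsilon> s t \<omega> (\<iota> f) \<in> K"
      using K(2) by simp
  qed
  have "eventually (\<lambda>\<epsilon>. \<epsilon> \<in> {0<..1}) (at_right (0::real))"
    using eventually_at_right_real[of 0 "1::real"] by (rule eventually_mono) auto
  then have "eventually (\<lambda>\<epsilon>. ereal (1 - \<Delta>) \<le> ereal (measure M {\<omega> \<in> space M.
               \<forall>t\<in>{s..T}. Veps \<Gamma> D xs Tn \<epsilon> s t \<omega> (\<iota> f) \<in> K})) (at_right 0)"
  proof eventually_elim
    case (elim \<epsilon>)
    have "measure M (space M) = 1"
      using MRP by (simp add: markov_renewal_def prob_space.prob_space)
    then show ?case
      using A by (simp add: whole_space[OF elim])
  qed
  then have "Liminf (at_right 0) (\<lambda>\<epsilon>. ereal (measure M {\<omega> \<in> space M.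
               \<forall>t\<in>{s..T}. Veps \<Gamma> D xs Tn \<epsilon> s t \<omega> (\<iota> f) \<in> K})) \<ge> ereal (1 - \<Delta>)"
    by (rule Liminf_bounded)
  with K(1) show "\<exists>K. compact K \<and> Liminf (at_right 0) (\<lambda>\<epsilon>. ereal (measure M {\<omega> \<in> space M.
               \<forall>t\<in>{s..T}. Veps \<Gamma> D xs Tn \<epsilon> s t \<omega> (\<iota> f) \<in> K})) \<ge> ereal (1 - \<Delta>)"
    by blast
qed

end
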